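(* Let $A$ be an associative algebra, $M$ an $A$-bimodule, $H:A\otimes A\to M$ a Hochschild $2$-cocycle, and $\{ T_\alpha : M \to A \}_{\alpha \in \Omega}$ an $H$-twisted $\mathcal{O}$-operator family. Then $(M , \{ \ast_{\alpha, \beta} \}_{\alpha, \beta \in \Omega})$ is an $\Omega$-associative algebra, where $u \ast_{\alpha, \beta} v = T_\alpha (u) \cdot v + u \cdot T_\beta (v) + H (T_\alpha (u), T_\beta (v))$ for $u,v\in M$, $\alpha,\beta\in\Omega$.
   Context: $\Omega$ is a semigroup. Hochschild $2$-cocycle: bilinear $H$ with $a \cdot H (b, c) - H ( a \cdot b, c)+ H (a, b \cdot c) - H (a, b) \cdot c =0$ for all $a,b,c\in A$. $H$-twisted $\mathcal{O}$-operator family: linear maps $T_\alpha:M\to A$ with $T_\alpha (u) \cdot T_\beta (v) = T_{\alpha \beta} \big( T_\alpha (u) \cdot v + u \cdot T_\beta (v) + H (T_\alpha (u), T_\beta (v)) \big)$ for all $u,v,\alpha,\beta$. An $\Omega$-associative algebra is a vector space $B$ with bilinear maps $\{\cdot_{\alpha,\beta}\}_{\alpha,\beta\in\Omega}$ such that $(a \cdot_{\alpha , \beta} b) \cdot_{\alpha \beta, \gamma} c = a \cdot_{\alpha, \beta \gamma} (b \cdot_{\beta, \gamma} c)$ for all $a,b,c$, $\alpha,\beta,\gamma$. *)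

theory Defs
  imports Complex_Main
begin

definition bilinear_map ::
  "('k::field \<Rightarrow> 'a::ab_group_add \<Rightarrow> 'a) \<Rightarrow> ('k \<Rightarrow> 'b::ab_group_add \<Rightarrow> 'b) \<Rightarrow>
   ('k \<Rightarrow> 'c::ab_group_add \<Rightarrow> 'c) \<Rightarrow> ('a \<Rightarrow> 'b \<Rightarrow> 'c) \<Rightarrow> bool" where
  "bilinear_map sA sB sC f \<longleftrightarrow>
     (\<forall>x. Vector_Spaces.linear sB sC (f x)) \<and> (\<forall>y. Vector_Spaces.linear sA sC (\<lambda>x. f x y))"

definition assoc_algebra :: "('k::field \<Rightarrow> 'a::ab_group_add \<Rightarrow> 'a) \<Rightarrow> ('a \<Rightarrow> 'a \<Rightarrow> 'a) \<Rightarrow> bool" where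
  "assoc_algebra sA mul \<longleftrightarrow> vector_space sA \<and> bilinear_map sA sA sA mul \<and>
     (\<forall>a b c. mul (mul a b) c = mul a (mul b c))"

definition bimodule ::
  "('k::field \<Rightarrow> 'a::ab_group_add \<Rightarrow> 'a) \<Rightarrow> ('a \<Rightarrow> 'a \<Rightarrow> 'a) \<Rightarrow>
   ('k \<Rightarrow> 'm::ab_group_add \<Rightarrow> 'm) \<Rightarrow> ('a \<Rightarrow> 'm \<Rightarrow> 'm) \<Rightarrow> ('m \<Rightarrow> 'a \<Rightarrow> 'm) \<Rightarrow> bool" where
  "bimodule sA mul sM l r \<longleftrightarrow> vector_space sM \<and>
     bilinear_map sA sM sM l \<and> bilinear_map sM sA sM r \<and>
     (\<forall>a b u. l (mul a b) u = l a (l b u)) \<and>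
     (\<forall>a b u. r (r u a) b = r u (mul a b)) \<and>
     (\<forall>a b u. r (l a u) b = l a (r u b))"

definition hochschild_2_cocycle ::
  "('k::field \<Rightarrow> 'a::ab_group_add \<Rightarrow> 'a) \<Rightarrow> ('a \<Rightarrow> 'a \<Rightarrow> 'a) \<Rightarrow>
   ('k \<Rightarrow> 'm::ab_group_add \<Rightarrow> 'm) \<Rightarrow> ('a \<Rightarrow> 'm \<Rightarrow> 'm) \<Rightarrow> ('m \<Rightarrow> 'a \<Rightarrow> 'm) \<Rightarrow>
   ('a \<Rightarrow> 'a \<Rightarrow> 'm) \<Rightarrow> bool" where
  "hochschild_2_cocycle sA mul sM l r H \<longleftrightarrow> bilinear_map sA sA sM H \<and>
     (\<forall>a b c. l a (H b c) - H (mul a b) c + H a (mul b c) - r (H a b) c = 0)"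

definition twisted_O_operator_family ::
  "('k::field \<Rightarrow> 'a::ab_group_add \<Rightarrow> 'a) \<Rightarrow> ('a \<Rightarrow> 'a \<Rightarrow> 'a) \<Rightarrow>
   ('k \<Rightarrow> 'm::ab_group_add \<Rightarrow> 'm) \<Rightarrow> ('a \<Rightarrow> 'm \<Rightarrow> 'm) \<Rightarrow> ('m \<Rightarrow> 'a \<Rightarrow> 'm) \<Rightarrow>
   ('a \<Rightarrow> 'a \<Rightarrow> 'm) \<Rightarrow> ('o::semigroup_mult \<Rightarrow> 'm \<Rightarrow> 'a) \<Rightarrow> bool" where
  "twisted_O_operator_family sA mul sM l r H T \<longleftrightarrow>
     (\<forall>\<alpha>. Vector_Spaces.linear sM sA (T \<alpha>)) \<and>
     (\<forall>u v \<alpha> \<beta>. mul (T \<alpha> u) (T \<beta> v) =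
         T (\<alpha> * \<beta>) (l (T \<alpha> u) v + r u (T \<beta> v) + H (T \<alpha> u) (T \<beta> v)))"

definition omega_assoc_algebra ::
  "('k::field \<Rightarrow> 'b::ab_group_add \<Rightarrow> 'b) \<Rightarrow> ('o::semigroup_mult \<Rightarrow> 'o \<Rightarrow> 'b \<Rightarrow> 'b \<Rightarrow> 'b) \<Rightarrow> bool" where
  "omega_assoc_algebra sB m \<longleftrightarrow> vector_space sB \<and>
     (\<forall>\<alpha> \<beta>. bilinear_map sB sB sB (m \<alpha> \<beta>)) \<and>
     (\<forall>a b c \<alpha> \<beta> \<gamma>. m (\<alpha> * \<beta>) \<gamma> (m \<alpha> \<beta> a b) c = m \<alpha> (\<beta> * \<gamma>) a (m \<beta> \<gamma> b c))"

end

theory Submission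
  imports Defs
begin

text \<open>The operator identity says that \<open>T\<^sub>\<alpha>\<^sub>\<beta>\<close> maps \<open>u \<ast>\<^sub>\<alpha>\<^sub>,\<^sub>\<beta> v\<close> to \<open>T\<^sub>\<alpha> u \<cdot> T\<^sub>\<beta> v\<close>.
  Writing \<open>a = T\<^sub>\<alpha> u\<close>, \<open>b = T\<^sub>\<beta> v\<close>, \<open>c = T\<^sub>\<gamma> w\<close> and expanding both sides of the
  associativity law with this identity and the bimodule axioms, all terms match except
  \<open>H(a,b) \<cdot> c + H(ab,c)\<close> on the left and \<open>a \<cdot> H(b,c) + H(a,bc)\<close> on the right, whose
  equality is exactly the cocycle condition.\<close>

definition twisted_product ::
  "('a \<Rightarrow> 'm::ab_group_add \<Rightarrow> 'm) \<Rightarrow> ('m \<Rightarrow> 'a \<Rightarrow> 'm) \<Rightarrow> ('a \<Rightarrow> 'a \<Rightarrow> 'm) \<Rightarrow>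
   ('o \<Rightarrow> 'm \<Rightarrow> 'a) \<Rightarrow> 'o \<Rightarrow> 'o \<Rightarrow> 'm \<Rightarrow> 'm \<Rightarrow> 'm" where
  "twisted_product l r H T \<alpha> \<beta> u v = l (T \<alpha> u) v + r u (T \<beta> v) + H (T \<alpha> u) (T \<beta> v)"

lemma linear_fun_add:
  assumes "Vector_Spaces.linear s1 s2 f" and "Vector_Spaces.linear s1 s2 g"
  shows "Vector_Spaces.linear s1 s2 (\<lambda>x. f x + g x)"
  using assms vector_space_pair.linear_compose_add
  by (metis Vector_Spaces.linear_iff vector_space_pair.intro)

lemma linear_fun_compose:
  assumes "Vector_Spaces.linear s1 s2 f" and "Vector_Spaces.linear s2 s3 g"
  shows "Vector_Spaces.linear s1 s3 (\<lambda>x. g (f x))"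
  using Vector_Spaces.linear_compose[OF assms] by (simp add: o_def)

lemma bilinear_map_twisted_product:
  assumes "bimodule sA mul sM l r"
    and "bilinear_map sA sA sM H"
    and "\<And>\<alpha>. Vector_Spaces.linear sM sA (T \<alpha>)"
  shows "bilinear_map sM sM sM (twisted_product l r H T \<alpha> \<beta>)"
proof -
  have l: "Vector_Spaces.linear sM sM (l a)" "Vector_Spaces.linear sA sM (\<lambda>a. l a u)"
    and r: "Vector_Spaces.linear sA sM (r u)" "Vector_Spaces.linear sM sM (\<lambda>u. r u a)"
    for a u
    using assms(1) by (simp_all add: bimodule_def bilinear_map_def)
  have H: "Vector_Spaces.linear sA sM (H a)" "Vector_Spaces.linear sA sM (\<lambda>a. H a b)" for a b
    using assms(2) by (simp_all add: bilinear_map_def)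
  note T = assms(3)
  show ?thesis
    unfolding bilinear_map_def twisted_product_def
    by (intro conjI allI linear_fun_add linear_fun_compose[OF T] l r H)
qed

lemma twisted_O_operator_family_twisted_product:
  assumes "twisted_O_operator_family sA mul sM l r H T"
  shows "T (\<alpha> * \<beta>) (twisted_product l r H T \<alpha> \<beta> u v) = mul (T \<alpha> u) (T \<beta> v)"
  using assms by (simp add: twisted_O_operator_family_def twisted_product_def)

lemma twisted_product_assoc:
  assumes bimod: "bimodule sA mul sM l r"
    and cocycle: "hochschild_2_cocycle sA mul sM l r H"
    and family: "twisted_O_operator_family sA mul sM l r H T"
  shows "twisted_product l r H T (\<alpha> * \<beta>) \<gamma> (twisted_product l r H T \<alpha> \<beta> u v) w =
         twisted_product l r H T \<alpha> (\<beta> * \<gamma>) u (twisted_product l r H T \<beta> \<gamma> v w)"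
proof -
  define a b c where "a = T \<alpha> u" and "b = T \<beta> v" and "c = T \<gamma> w"
  have l_add: "l x (m + n) = l x m + l x n" and r_add: "r (m + n) x = r m x + r n x" for x m n
    using bimod by (simp_all add: bimodule_def bilinear_map_def Vector_Spaces.linear_iff)
  have l_mul: "l (mul x y) m = l x (l y m)" and r_mul: "r (r m x) y = r m (mul x y)"
    and l_r: "r (l x m) y = l x (r m y)" for x y m
    using bimod by (simp_all add: bimodule_def)
  have cocycle_identity: "r (H a b) c + H (mul a b) c = l a (H b c) + H a (mul b c)"
    using cocycle by (simp add: hochschild_2_cocycle_def algebra_simps)
  note hom = twisted_O_operator_family_twisted_product[OF family]
  have "twisted_product l r H T (\<alpha> * \<beta>) \<gamma> (twisted_product l r H T \<alpha> \<beta> u v) w =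
        l (mul a b) w + r (l a v + r u b + H a b) c + H (mul a b) c"
    unfolding twisted_product_def[of l r H T "\<alpha> * \<beta>"] hom
    by (simp add: twisted_product_def a_def b_def c_def)
  also have "\<dots> = l a (l b w) + l a (r v c) + r u (mul b c) + (r (H a b) c + H (mul a b) c)"
    by (simp add: r_add l_mul r_mul l_r algebra_simps)
  also have "\<dots> = l a (l b w) + l a (r v c) + r u (mul b c) + (l a (H b c) + H a (mul b c))"
    by (simp only: cocycle_identity)
  also have "\<dots> = l a (l b w + r v c + H b c) + r u (mul b c) + H a (mul b c)"
    by (simp add: l_add algebra_simps)
  also have "\<dots> = twisted_product l r H T \<alpha> (\<beta> * \<gamma>) u (twisted_product l r H T \<beta> \<gamma> v w)"
    unfolding twisted_product_def[of l r H T \<alpha> "\<beta> * \<gamma>"] hom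
    by (simp add: twisted_product_def a_def b_def c_def)
  finally show ?thesis .
qed

lemma omega_assoc_algebra_twisted_product:
  assumes "bimodule sA mul sM l r"
    and "hochschild_2_cocycle sA mul sM l r H"
    and "twisted_O_operator_family sA mul sM l r H T"
  shows "omega_assoc_algebra sM (twisted_product l r H T)"
proof -
  have "vector_space sM"
    using assms(1) by (simp add: bimodule_def)
  moreover have "bilinear_map sM sM sM (twisted_product l r H T \<alpha> \<beta>)" for \<alpha> \<beta>
  proof (rule bilinear_map_twisted_product[OF assms(1)])
    show "bilinear_map sA sA sM H"
      using assms(2) by (simp add: hochschild_2_cocycle_def)
    show "Vector_Spaces.linear sM sA (T \<alpha>)" for \<alpha>
      using assms(3) by (simp add: twisted_O_operator_family_def)
  qed
  ultimately show ?thesis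
    using twisted_product_assoc[OF assms] by (simp add: omega_assoc_algebra_def)
qed

theorem proposition4p3:
  fixes sA :: "'k::field \<Rightarrow> 'a::ab_group_add \<Rightarrow> 'a"
    and mul :: "'a \<Rightarrow> 'a \<Rightarrow> 'a"
    and sM :: "'k \<Rightarrow> 'm::ab_group_add \<Rightarrow> 'm"
    and l :: "'a \<Rightarrow> 'm \<Rightarrow> 'm" and r :: "'m \<Rightarrow> 'a \<Rightarrow> 'm"
    and H :: "'a \<Rightarrow> 'a \<Rightarrow> 'm"
    and T :: "'o::semigroup_mult \<Rightarrow> 'm \<Rightarrow> 'a"
  assumes "assoc_algebra sA mul"
    and "bimodule sA mul sM l r"
    and "hochschild_2_cocycle sA mul sM l r H"
    and "twisted_O_operator_family sA mul sM l r H T"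
  shows "omega_assoc_algebra sM
           (\<lambda>\<alpha> \<beta> u v. l (T \<alpha> u) v + r u (T \<beta> v) + H (T \<alpha> u) (T \<beta> v))"
  using omega_assoc_algebra_twisted_product[OF assms(2-4)]
  unfolding twisted_product_def[abs_def] .

end
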